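(* For every instance of a rule of $\mathsf{G4iSLt}$ with conclusion $S_0$ and premises $S_1,\dots,S_n$, we have $\Theta(S_i)\prec\Theta(S_0)$ for every $1\le i\le n$, where $\prec$ is the shortlex order.
   Context: Formulas are built by the grammar $\varphi ::= p \mid \bot \mid \varphi\land\varphi \mid \varphi\lor\varphi \mid \varphi\to\varphi \mid \Box\varphi$, with $p$ ranging over a countably infinite set of propositional variables. For a multiset $\Gamma$, $\Box\Gamma=\{\Box\psi:\psi\in\Gamma\}$; a boxed formula is one of the form $\Box\psi$. Weight: $w(\bot)=w(p)=1$; $w(\psi\lor\chi)=w(\psi\to\chi)=w(\psi)+w(\chi)+1$; $w(\psi\land\chi)=w(\psi)+w(\chi)+2$; $w(\Box\psi)=w(\psi)+1$. For a finite multiset $\Delta$ of formulas whose maximal weight is $n$, let $L(\Delta)$ be the list $[c_n,c_{n-1},\dots,c_1]$ of natural numbers of length $n$ where $c_m$ is the number of occurrences in $\Delta$ of formulas of weight $m$ (so the leftmost entry counts formulas of maximal weight; $L$ of the empty multiset is the empty list). For a sequent $\Gamma\Rightarrow\chi$, write $\Gamma=\Gamma_0,\Box\Gamma_1$ where $\Gamma_0$ contains no boxed formula, and set $\Theta(\Gamma\Rightarrow\chi)=L(\Gamma_0\uplus\Gamma_1\uplus\{\chi\})$ (the antecedent's outermost boxes are removed). The shortlex order on lists of natural numbers: $l_0\prec l_1$ iff either $\mathrm{length}(l_0)<\mathrm{length}(l_1)$, or the lengths are equal and $l_0$ is lexicographically smaller than $l_1$ (i.e. at the first position $j$ where they differ,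 the entry of $l_0$ is smaller). A sequent is $\Gamma\Rightarrow\chi$ with $\Gamma$ a finite multiset of formulas and $\chi$ a formula. The sequent calculus $\mathsf{G4iSLt}$ has the following rules, where $p$ is a propositional variable and $\Phi$ always denotes a multiset containing no boxed formula: (⊥L) $\bot,\Gamma\Rightarrow\chi$ (no premise); (IdP) $\Gamma,p\Rightarrow p$ (no premise); (∧L) from $\Gamma,\varphi,\psi\Rightarrow\chi$ infer $\Gamma,\varphi\land\psi\Rightarrow\chi$; (∧R) from $\Gamma\Rightarrow\varphi$ and $\Gamma\Rightarrow\psi$ infer $\Gamma\Rightarrow\varphi\land\psi$; (∨L) from $\Gamma,\varphi\Rightarrow\chi$ and $\Gamma,\psi\Rightarrow\chi$ infer $\Gamma,\varphi\lor\psi\Rightarrow\chi$; (∨R$_i$), $i\in\{1,2\}$: from $\Gamma\Rightarrow\varphi_i$ infer $\Gamma\Rightarrow\varphi_1\lor\varphi_2$; (p→L) from $\Gamma,p,\varphi\Rightarrow\chi$ infer $\Gamma,p,p\to\varphi\Rightarrow\chi$; (→R) from $\Gamma,\varphi\Rightarrow\psi$ infer $\Gamma\Rightarrow\varphi\to\psi$; (□→L) from $\Phi,\Gamma,\psi,\Box\varphi\Rightarrow\varphi$ and $\Phi,\Box\Gamma,\psi\Rightarrow\chi$ infer $\Phi,\Box\Gamma,\Box\varphi\to\psi\Rightarrow\chi$; (SLtR) from $\Phi,\Gamma,\Box\varphi\Rightarrow\varphi$ infer $\Phi,\Box\Gamma\Rightarrow\Box\varphi$; (∧→L) from $\Gamma,\varphi\to(\psi\to\chi)\Rightarrow\delta$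 infer $\Gamma,(\varphi\land\psi)\to\chi\Rightarrow\delta$; (∨→L) from $\Gamma,\varphi\to\chi,\psi\to\chi\Rightarrow\delta$ infer $\Gamma,(\varphi\lor\psi)\to\chi\Rightarrow\delta$; (→→L) from $\Gamma,\psi\to\chi\Rightarrow\varphi\to\psi$ and $\Gamma,\chi\Rightarrow\delta$ infer $\Gamma,(\varphi\to\psi)\to\chi\Rightarrow\delta$. *)

theory Defs
  imports Main "HOL-Library.Multiset"
begin

datatype form = Var nat | Bot | And form form | Or form form | Imp form form | Box form

fun w :: "form \<Rightarrow> nat" where
  "w Bot = 1"
| "w (Var p) = 1"
| "w (Or a b) = w a + w b + 1"
| "w (Imp a b) = w a + w b + 1"
| "w (And a b) = w a + w b + 2"
| "w (Box a) = w a + 1"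

fun is_box :: "form \<Rightarrow> bool" where
  "is_box (Box _) = True"
| "is_box _ = False"

fun unbox :: "form \<Rightarrow> form" where
  "unbox (Box a) = a"
| "unbox a = a"

definition no_box :: "form multiset \<Rightarrow> bool" where
  "no_box \<Phi> \<longleftrightarrow> (\<forall>a \<in># \<Phi>. \<not> is_box a)"

type_synonym sequent = "form multiset \<times> form"

definition L :: "form multiset \<Rightarrow> nat list" where
  "L \<Delta> = (if \<Delta> = {#} then []
     else map (\<lambda>m. size (filter_mset (\<lambda>a. w a = m) \<Delta>))
              (rev [1..<Max (w ` set_mset \<Delta>) + 1]))"

definition Theta :: "sequent \<Rightarrow> nat list" where
  "Theta S = (case S of (\<Gamma>, \<chi>) \<Rightarrow>
     L (filter_mset (\<lambda>a. \<not> is_box a) \<Gamma>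
        + image_mset unbox (filter_mset is_box \<Gamma>) + {#\<chi>#}))"

definition shortlex :: "nat list \<Rightarrow> nat list \<Rightarrow> bool" where
  "shortlex l0 l1 \<longleftrightarrow> length l0 < length l1 \<or>
     (length l0 = length l1 \<and>
      (\<exists>j < length l0. take j l0 = take j l1 \<and> l0 ! j < l1 ! j))"

inductive rule :: "sequent list \<Rightarrow> sequent \<Rightarrow> bool" where
  BotL: "rule [] (add_mset Bot \<Gamma>, \<chi>)"
| IdP: "rule [] (add_mset (Var p) \<Gamma>, Var p)"
| AndL: "rule [(\<Gamma> + {#\<phi>, \<psi>#}, \<chi>)] (add_mset (And \<phi> \<psi>) \<Gamma>, \<chi>)"
| AndR: "rule [(\<Gamma>, \<phi>), (\<Gamma>, \<psi>)] (\<Gamma>, And \<phi> \<psi>)"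
| OrL: "rule [(add_mset \<phi> \<Gamma>, \<chi>), (add_mset \<psi> \<Gamma>, \<chi>)] (add_mset (Or \<phi> \<psi>) \<Gamma>, \<chi>)"
| OrR1: "rule [(\<Gamma>, \<phi>)] (\<Gamma>, Or \<phi> \<psi>)"
| OrR2: "rule [(\<Gamma>, \<psi>)] (\<Gamma>, Or \<phi> \<psi>)"
| pImpL: "rule [(\<Gamma> + {#Var p, \<phi>#}, \<chi>)] (\<Gamma> + {#Var p, Imp (Var p) \<phi>#}, \<chi>)"
| ImpR: "rule [(add_mset \<phi> \<Gamma>, \<psi>)] (\<Gamma>, Imp \<phi> \<psi>)"
| BoxImpL: "no_box \<Phi> \<Longrightarrow>
    rule [(\<Phi> + \<Gamma> + {#\<psi>, Box \<phi>#}, \<phi>), (\<Phi> + image_mset Box \<Gamma> + {#\<psi>#}, \<chi>)]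
         (\<Phi> + image_mset Box \<Gamma> + {#Imp (Box \<phi>) \<psi>#}, \<chi>)"
| SLtR: "no_box \<Phi> \<Longrightarrow>
    rule [(\<Phi> + \<Gamma> + {#Box \<phi>#}, \<phi>)] (\<Phi> + image_mset Box \<Gamma>, Box \<phi>)"
| AndImpL: "rule [(add_mset (Imp \<phi> (Imp \<psi> \<chi>)) \<Gamma>, \<delta>)] (add_mset (Imp (And \<phi> \<psi>) \<chi>) \<Gamma>, \<delta>)"
| OrImpL: "rule [(\<Gamma> + {#Imp \<phi> \<chi>, Imp \<psi> \<chi>#}, \<delta>)] (add_mset (Imp (Or \<phi> \<psi>) \<chi>) \<Gamma>, \<delta>)"
| ImpImpL: "rule [(add_mset (Imp \<psi> \<chi>) \<Gamma>, Imp \<phi> \<psi>), (add_mset \<chi> \<Gamma>, \<delta>)]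
                 (add_mset (Imp (Imp \<phi> \<psi>) \<chi>) \<Gamma>, \<delta>)"

end

theory Submission
  imports Defs "HOL-Library.Multiset_Order"
begin

text \<open>Theta S is the count vector, heaviest weight first, of the multiset of weights of S
  (antecedent unboxed). On multisets of positive naturals the shortlex order of count vectors
  extends the multiset order: the largest weight at which two multisets differ decides both
  comparisons. In every rule of G4iSLt a premise arises from the conclusion by replacing the weight
  of the principal formula with finitely many smaller weights, possibly after lowering (unboxing)
  or discarding other weights, so the weight multiset strictly decreases.\<close>

definition profile :: "nat multiset \<Rightarrow> nat list" where
  "profile M = (if M = {#} then [] else map (count M) (rev [1..<Max_mset M + 1]))"

lemma L_eq_profile: "L \<Delta> = profile (image_mset w \<Delta>)"
proof -
  have "size (filter_mset (\<lambda>a. w a = m) \<Delta>) = count (image_mset w \<Delta>) m" for m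
    by (induction \<Delta>) auto
  then show ?thesis
    by (simp add: L_def profile_def)
qed

lemma length_profile: "M \<noteq> {#} \<Longrightarrow> length (profile M) = Max_mset M"
  by (simp add: profile_def)

lemma nth_profile:
  assumes "M \<noteq> {#}" and "i < Max_mset M"
  shows "profile M ! i = count M (Max_mset M - i)"
  using assms by (simp add: profile_def rev_nth Suc_diff_Suc del: upt_Suc)

lemma greatest_count_difference:
  fixes M N :: "'a::linorder multiset"
  assumes "M < N"
  obtains x where "count M x < count N x" and "\<And>y. x < y \<Longrightarrow> count M y = count N y"
proof -
  define D where "D = {y. count M y \<noteq> count N y}"
  have "finite D"
    by (rule finite_subset[of _ "set_mset M \<union> set_mset N"])
      (auto simp: D_def count_eq_zero_iff[symmetric])
  moreover have "D \<noteq> {}"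
    using assms by (auto simp: D_def multiset_eq_iff less_multiset\<^sub>H\<^sub>O)
  ultimately have "Max D \<in> D"
    by (rule Max_in)
  have above: "count M y = count N y" if "Max D < y" for y
  proof -
    have "y \<notin> D"
      using Max_ge[OF \<open>finite D\<close>, of y] that by auto
    then show ?thesis
      unfolding D_def by simp
  qed
  have "\<not> count N (Max D) < count M (Max D)"
    using assms above unfolding less_multiset\<^sub>H\<^sub>O by fastforce
  with \<open>Max D \<in> D\<close> have "count M (Max D) < count N (Max D)"
    by (simp add: D_def)
  then show ?thesis
    using above by (rule that)
qed

lemma shortlexI:
  assumes "length l0 = length l1" and "j < length l0"
    and "\<And>i. i < j \<Longrightarrow> l0 ! i = l1 ! i" and "l0 ! j < l1 ! j"
  shows "shortlex l0 l1"
proof -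
  have "take j l0 = take j l1"
    using assms by (intro nth_equalityI) auto
  then show ?thesis
    using assms unfolding shortlex_def by blast
qed

lemma Max_mset_le_if_less:
  fixes M N :: "'a::linorder multiset"
  assumes "M < N" and "M \<noteq> {#}"
  shows "Max_mset M \<le> Max_mset N"
proof (rule ccontr)
  assume "\<not> ?thesis"
  obtain x where "count M x < count N x" and above_x: "\<And>y. x < y \<Longrightarrow> count M y = count N y"
    using greatest_count_difference[OF assms(1)] by blast
  then have "x \<in># N"
    by (metis count_greater_zero_iff gr0I less_zeroE)
  then have "x \<le> Max_mset N"
    by simp
  with \<open>\<not> ?thesis\<close> have "Max_mset M \<notin># N" and "x < Max_mset M"
    by auto
  moreover have "Max_mset M \<in># M"
    using assms(2) by simp
  ultimately show False
    using above_x[of "Max_mset M"] by (metis count_eq_zero_iff)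
qed

lemma shortlex_profile_if_less:
  assumes "M < N" and "0 \<notin># M" and "0 \<notin># N"
  shows "shortlex (profile M) (profile N)"
proof -
  obtain x where x_less: "count M x < count N x"
    and above_x: "\<And>y. x < y \<Longrightarrow> count M y = count N y"
    using greatest_count_difference[OF assms(1)] by blast
  have "x \<in># N"
    using x_less by (metis count_greater_zero_iff gr0I less_zeroE)
  then have "N \<noteq> {#}" and "x \<le> Max_mset N" and "0 < x"
    using assms(3) by (auto intro: gr0I)
  show ?thesis
  proof (cases "M = {#}")
    case True
    then show ?thesis
      using \<open>N \<noteq> {#}\<close> \<open>x \<le> Max_mset N\<close> \<open>0 < x\<close>
      by (simp add: shortlex_def length_profile profile_def)
  next
    case False
    then consider "Max_mset M < Max_mset N" | "Max_mset M = Max_mset N"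
      using Max_mset_le_if_less[OF assms(1)] by fastforce
    then show ?thesis
    proof cases
      case 1
      then show ?thesis
        using \<open>M \<noteq> {#}\<close> \<open>N \<noteq> {#}\<close> by (simp add: shortlex_def length_profile)
    next
      case 2
      show ?thesis
      proof (rule shortlexI[where j = "Max_mset N - x"])
        show "length (profile M) = length (profile N)"
          using \<open>M \<noteq> {#}\<close> \<open>N \<noteq> {#}\<close> 2 by (simp add: length_profile)
        show "Max_mset N - x < length (profile M)"
          using \<open>M \<noteq> {#}\<close> \<open>x \<le> Max_mset N\<close> \<open>0 < x\<close> 2 by (simp add: length_profile)
        show "profile M ! i = profile N ! i" if "i < Max_mset N - x" for i
          using that \<open>M \<noteq> {#}\<close> \<open>N \<noteq> {#}\<close> 2 above_x by (simp add: nth_profile)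
        show "profile M ! (Max_mset N - x) < profile N ! (Max_mset N - x)"
          using \<open>M \<noteq> {#}\<close> \<open>N \<noteq> {#}\<close> \<open>x \<le> Max_mset N\<close> \<open>0 < x\<close> 2 x_less
          by (simp add: nth_profile)
      qed
    qed
  qed
qed

lemma w_pos: "0 < w a"
  by (induction a) auto

lemma w_unbox_le: "w (unbox a) \<le> w a"
  by (cases a) auto

definition unboxed_weights :: "form multiset \<Rightarrow> nat multiset" where
  "unboxed_weights \<Gamma> = image_mset (\<lambda>a. w (unbox a)) \<Gamma>"

lemma unboxed_weights_simps [simp]:
  "unboxed_weights {#} = {#}"
  "unboxed_weights (add_mset a \<Gamma>) = add_mset (w (unbox a)) (unboxed_weights \<Gamma>)"
  "unboxed_weights (\<Gamma> + \<Delta>) = unboxed_weights \<Gamma> + unboxed_weights \<Delta>"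
  "unboxed_weights (image_mset Box \<Gamma>) = image_mset w \<Gamma>"
  by (simp_all add: unboxed_weights_def image_mset.compositionality comp_def)

lemma unboxed_weights_le: "unboxed_weights \<Gamma> \<le> image_mset w \<Gamma>"
  by (induction \<Gamma>) (simp_all add: add_mset_le_le_le w_unbox_le)

definition theta_weights :: "sequent \<Rightarrow> nat multiset" where
  "theta_weights S = add_mset (w (snd S)) (unboxed_weights (fst S))"

lemma theta_weights_Pair [simp]:
  "theta_weights (\<Gamma>, \<chi>) = add_mset (w \<chi>) (unboxed_weights \<Gamma>)"
  by (simp add: theta_weights_def)

lemma Theta_eq_profile: "Theta S = profile (theta_weights S)"
proof -
  have "filter_mset (\<lambda>a. \<not> is_box a) \<Gamma> + image_mset unbox (filter_mset is_box \<Gamma>)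
      = image_mset unbox \<Gamma>" for \<Gamma>
  proof (induction \<Gamma>)
    case (add a \<Gamma>)
    then show ?case by (cases a) auto
  qed simp
  then show ?thesis
    by (cases S) (simp add: Theta_def L_eq_profile unboxed_weights_def
        image_mset.compositionality comp_def)
qed

lemma zero_not_in_theta_weights: "0 \<notin># theta_weights S"
  using w_pos by (auto simp: theta_weights_def unboxed_weights_def) (metis less_irrefl)

lemma add_less_add_mset:
  fixes A B :: "'a::linorder multiset"
  assumes "A \<le> B" and "\<forall>k \<in># K. k < x"
  shows "A + K < add_mset x B"
proof -
  have "A + K \<le> B + K"
    using assms(1) by (rule add_right_mono)
  also have "B + K < B + {#x#}"
    using assms(2) by (intro add_strict_left_mono) simp
  finally show ?thesis
    by simp
qed

lemma theta_weights_decrease: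
  assumes "rule ps S0" and "S \<in> set ps"
  shows "theta_weights S < theta_weights S0"
  using assms
proof (induction rule: rule.induct)
  case (AndL \<Gamma> \<phi> \<psi> \<chi>)
  have "theta_weights (\<Gamma>, \<chi>) + {#w (unbox \<phi>), w (unbox \<psi>)#}
      < add_mset (w (And \<phi> \<psi>)) (theta_weights (\<Gamma>, \<chi>))"
    using w_unbox_le[of \<phi>] w_unbox_le[of \<psi>] by (intro add_less_add_mset order.refl) auto
  with AndL show ?case
    by (simp add: ac_simps)
next
  case (AndR \<Gamma> \<phi> \<psi>)
  have "unboxed_weights \<Gamma> + {#w \<phi>#} < add_mset (w (And \<phi> \<psi>)) (unboxed_weights \<Gamma>)"
    and "unboxed_weights \<Gamma> + {#w \<psi>#} < add_mset (w (And \<phi> \<psi>)) (unboxed_weights \<Gamma>)"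
    by (intro add_less_add_mset order.refl; simp)+
  with AndR show ?case
    by auto
next
  case (OrL \<phi> \<Gamma> \<chi> \<psi>)
  have "theta_weights (\<Gamma>, \<chi>) + {#w (unbox \<phi>)#} < add_mset (w (Or \<phi> \<psi>)) (theta_weights (\<Gamma>, \<chi>))"
    and "theta_weights (\<Gamma>, \<chi>) + {#w (unbox \<psi>)#} < add_mset (w (Or \<phi> \<psi>)) (theta_weights (\<Gamma>, \<chi>))"
    using w_unbox_le[of \<phi>] w_unbox_le[of \<psi>] by (intro add_less_add_mset order.refl; simp)+
  with OrL show ?case
    by (auto simp: ac_simps)
next
  case (OrR1 \<Gamma> \<phi> \<psi>)
  have "unboxed_weights \<Gamma> + {#w \<phi>#} < add_mset (w (Or \<phi> \<psi>)) (unboxed_weights \<Gamma>)"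
    by (intro add_less_add_mset order.refl) simp
  with OrR1 show ?case
    by simp
next
  case (OrR2 \<Gamma> \<psi> \<phi>)
  have "unboxed_weights \<Gamma> + {#w \<psi>#} < add_mset (w (Or \<phi> \<psi>)) (unboxed_weights \<Gamma>)"
    by (intro add_less_add_mset order.refl) simp
  with OrR2 show ?case
    by simp
next
  case (pImpL \<Gamma> p \<phi> \<chi>)
  have "theta_weights (\<Gamma> + {#Var p#}, \<chi>) + {#w (unbox \<phi>)#}
      < add_mset (w (Imp (Var p) \<phi>)) (theta_weights (\<Gamma> + {#Var p#}, \<chi>))"
    using w_unbox_le[of \<phi>] by (intro add_less_add_mset order.refl) simp
  with pImpL show ?case
    by (simp add: ac_simps)
next
  case (ImpR \<phi> \<Gamma> \<psi>)
  have "unboxed_weights \<Gamma> + {#w (unbox \<phi>), w \<psi>#} < add_mset (w (Imp \<phi> \<psi>)) (unboxed_weights \<Gamma>)"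
    using w_unbox_le[of \<phi>] w_pos[of \<phi>] by (intro add_less_add_mset order.refl) auto
  with ImpR show ?case
    by (simp add: ac_simps)
next
  case (BoxImpL \<Phi> \<Gamma> \<psi> \<phi> \<chi>)
  let ?A = "unboxed_weights \<Phi> + unboxed_weights \<Gamma>"
  let ?B = "theta_weights (\<Phi> + image_mset Box \<Gamma>, \<chi>)"
  have "?A \<le> unboxed_weights \<Phi> + image_mset w \<Gamma>"
    using unboxed_weights_le by (rule add_left_mono)
  also have "\<dots> \<le> ?B"
    by (simp add: order.strict_implies_order[OF le_multiset_right_total])
  finally have "?A + {#w (unbox \<psi>), w \<phi>, w \<phi>#} < add_mset (w (Imp (Box \<phi>) \<psi>)) ?B"
    using w_unbox_le[of \<psi>] by (intro add_less_add_mset) auto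
  moreover have "?B + {#w (unbox \<psi>)#} < add_mset (w (Imp (Box \<phi>) \<psi>)) ?B"
    using w_unbox_le[of \<psi>] by (intro add_less_add_mset order.refl) auto
  ultimately show ?case
    using BoxImpL.prems by (auto simp: ac_simps add_mset_commute)
next
  case (SLtR \<Phi> \<Gamma> \<phi>)
  have "unboxed_weights \<Phi> + unboxed_weights \<Gamma> \<le> unboxed_weights \<Phi> + image_mset w \<Gamma>"
    using unboxed_weights_le by (rule add_left_mono)
  then have "unboxed_weights \<Phi> + unboxed_weights \<Gamma> + {#w \<phi>, w \<phi>#}
      < add_mset (w (Box \<phi>)) (unboxed_weights \<Phi> + image_mset w \<Gamma>)"
    by (intro add_less_add_mset) auto
  with SLtR show ?case
    by (simp add: ac_simps)
next
  case (AndImpL \<phi> \<psi> \<chi> \<Gamma> \<delta>)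
  have "theta_weights (\<Gamma>, \<delta>) + {#w (Imp \<phi> (Imp \<psi> \<chi>))#}
      < add_mset (w (Imp (And \<phi> \<psi>) \<chi>)) (theta_weights (\<Gamma>, \<delta>))"
    by (intro add_less_add_mset order.refl) simp
  with AndImpL show ?case
    by (simp add: ac_simps)
next
  case (OrImpL \<Gamma> \<phi> \<chi> \<psi> \<delta>)
  have "theta_weights (\<Gamma>, \<delta>) + {#w (Imp \<phi> \<chi>), w (Imp \<psi> \<chi>)#}
      < add_mset (w (Imp (Or \<phi> \<psi>) \<chi>)) (theta_weights (\<Gamma>, \<delta>))"
    using w_pos[of \<phi>] w_pos[of \<psi>] by (intro add_less_add_mset order.refl) auto
  with OrImpL show ?case
    by (simp add: ac_simps)
next
  case (ImpImpL \<psi> \<chi> \<Gamma> \<phi> \<delta>)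
  have "unboxed_weights \<Gamma> \<le> theta_weights (\<Gamma>, \<delta>)"
    by (simp add: order.strict_implies_order[OF le_multiset_right_total])
  then have "unboxed_weights \<Gamma> + {#w (Imp \<psi> \<chi>), w (Imp \<phi> \<psi>)#}
      < add_mset (w (Imp (Imp \<phi> \<psi>) \<chi>)) (theta_weights (\<Gamma>, \<delta>))"
    using w_pos[of \<phi>] w_pos[of \<chi>] by (intro add_less_add_mset) auto
  moreover have "theta_weights (\<Gamma>, \<delta>) + {#w (unbox \<chi>)#}
      < add_mset (w (Imp (Imp \<phi> \<psi>) \<chi>)) (theta_weights (\<Gamma>, \<delta>))"
    using w_unbox_le[of \<chi>] by (intro add_less_add_mset order.refl) auto
  ultimately show ?case
    using ImpImpL.prems by (auto simp: ac_simps add_mset_commute)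
qed auto

theorem lemma3:
  assumes "rule ps S0"
      and "S \<in> set ps"
  shows "shortlex (Theta S) (Theta S0)"
  unfolding Theta_eq_profile
  using theta_weights_decrease[OF assms] zero_not_in_theta_weights zero_not_in_theta_weights
  by (rule shortlex_profile_if_less)

end
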